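(* Let $X_1,X_2,\dots$ be independent identically distributed random variables, $S_n=X_1+\dots+X_n$, $\{\tau_n\}$ a nonnegative sequence satisfying Condition A, and $\{a_n\}$ a non-decreasing strictly positive sequence tending to $\infty$. Suppose there exist finite constants $\theta\ge1$, $C>0$, $N\ge2$ with $\frac{a_n^{3\theta}}{n^{\theta-1}}\sum_{k=n}^\infty\frac{k^\theta\tau_k}{a_k^{3\theta}}\le C\sum_{k=1}^{n-1}k\tau_k$ for all $n\ge N$, and if $\theta>1$ that $\liminf_{n\to\infty}\inf_{k\ge n}\frac{a_k^3}{ka_n^3}\sum_{j=1}^{n-1}j\tau_j>0$. If $\sum_{n=1}^\infty\tau_nP(|S_n|\ge\varepsilon a_n)<\infty$ for all $\varepsilon>0$, then: (i) there is a sequence $\{\mu_n\}$ with $\mu_n$ a median of $S_n$ for each $n$ such that for every $\varepsilon>0$, $\sum_{n:\,|\mu_n|>\varepsilon a_n}\tau_n<\infty$; and (ii) $\sum_{n=1}^\infty n\tau_nP(|X_1|\ge\varepsilon a_n)<\infty$ for all $\varepsilon>0$.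
   Context: A nonnegative sequence $\{\tau_n\}$ satisfies Condition A if for every nonnegative non-increasing sequence $\{c_n\}$ with $\sum_n\tau_n\min(nc_n,1)<\infty$ we also have $\sum_n\tau_nnc_n<\infty$. *)

theory Defs
  imports "HOL-Probability.Probability"
begin

text \<open>Condition A for a (nonnegative) sequence tau indexed by n = 1,2,...
  (the n = 0 term of each series is 0, so summing over all nat is harmless).\<close>
definition condition_A :: "(nat \<Rightarrow> real) \<Rightarrow> bool" where
  "condition_A \<tau> \<longleftrightarrow>
     (\<forall>c :: nat \<Rightarrow> real. (\<forall>n. c n \<ge> 0) \<and> antimono c \<and>
        summable (\<lambda>n. \<tau> n * min (real n * c n) 1)
        \<longrightarrow> summable (\<lambda>n. \<tau> n * (real n * c n)))"

definition is_median :: "'a measure \<Rightarrow> ('a \<Rightarrow> real) \<Rightarrow> real \<Rightarrow> bool" where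
  "is_median M Y m \<longleftrightarrow>
     measure M {x \<in> space M. Y x \<le> m} \<ge> 1/2 \<and> measure M {x \<in> space M. Y x \<ge> m} \<ge> 1/2"

end

theory Submission
  imports Defs
begin

text \<open>
  Part (i): if a median \<open>\<mu>\<^sub>n\<close> of \<open>S\<^sub>n\<close> satisfies \<open>|\<mu>\<^sub>n| > \<epsilon> a\<^sub>n\<close>, then
  \<open>P(|S\<^sub>n| \<ge> \<epsilon> a\<^sub>n) \<ge> 1/2\<close>, so these \<open>\<tau>\<^sub>n\<close> are dominated by twice a convergent series.

  Part (ii): let \<open>m\<close> be a median of \<open>|X\<^sub>1|\<close>, \<open>t \<ge> m\<close>, \<open>p = P(|X\<^sub>1| \<ge> 3t)\<close> and
  \<open>R\<^sub>k = S\<^sub>n - X\<^sub>k\<close>. Independence of \<open>X\<^sub>k\<close> and \<open>R\<^sub>k\<close> gives \<open>P(|R\<^sub>k| \<ge> 2t) \<le> 2 P(|S\<^sub>n| \<ge> t)\<close>,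
  so the events \<open>{|X\<^sub>k| \<ge> 3t, |R\<^sub>k| < 2t} \<subseteq> {|S\<^sub>n| \<ge> t}\<close> have probability at least
  \<open>p (1 - 2 P(|S\<^sub>n| \<ge> t))\<close>, while any two of them intersect with probability at most \<open>p\<^sup>2\<close>.
  Bonferroni's inequality for \<open>r \<le> n\<close> of these events, with \<open>1/2 \<le> r p \<le> 1\<close> when \<open>n p > 1\<close>,
  yields \<open>min(n p, 1) \<le> 12 P(|S\<^sub>n| \<ge> t)\<close>. For \<open>t = \<epsilon> a\<^sub>n / 3\<close> this makes
  \<open>\<Sum> \<tau>\<^sub>n min(n c\<^sub>n, 1)\<close> converge, where \<open>c\<^sub>n = P(|X\<^sub>1| \<ge> \<epsilon> a\<^sub>n)\<close> is non-increasing, and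
  Condition A removes the minimum.
\<close>

lemma (in real_distribution) exists_median:
  "\<exists>m. 1/2 \<le> measure M {..m} \<and> 1/2 \<le> measure M {m..}"
proof -
  define S where "S = {t. 1/2 \<le> cdf M t}"
  obtain b where b: "\<And>t. t \<le> b \<Longrightarrow> cdf M t < 1/2"
    using order_tendstoD(2)[OF cdf_lim_at_bot, of "1/2"]
    by (auto simp: eventually_at_bot_linorder)
  obtain t0 where "1/2 < cdf M t0"
    using order_tendstoD(1)[OF cdf_lim_at_top_prob, of "1/2"]
    by (auto simp: eventually_at_top_linorder)
  then have "t0 \<in> S" by (simp add: S_def)
  then have ne: "S \<noteq> {}" by auto
  have bdd: "bdd_below S"
  proof (rule bdd_belowI)
    fix t assume "t \<in> S"
    then show "b \<le> t" using b[of t] by (force simp: S_def)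
  qed
  define m where "m = Inf S"
  have "1/2 \<le> cdf M m"
  proof (rule tendsto_lowerbound)
    show "(cdf M \<longlongrightarrow> cdf M m) (at_right m)"
      using cdf_is_right_cont[of m] by (simp add: continuous_within)
    show "\<forall>\<^sub>F t in at_right m. 1/2 \<le> cdf M t"
      using eventually_at_right_less[of m]
    proof (rule eventually_mono)
      fix t assume "m < t"
      then obtain s where "s \<in> S" "s < t" using cInf_less_iff[OF ne bdd] m_def by auto
      then show "1/2 \<le> cdf M t" using cdf_nondecreasing[of s t] by (auto simp: S_def)
    qed
  qed simp
  moreover have "measure M {..<m} \<le> 1/2"
  proof (rule tendsto_upperbound[OF cdf_at_left])
    show "\<forall>\<^sub>F t in at_left m. cdf M t \<le> 1/2"
      using eventually_at_left_real[of "m - 1" m]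
    proof (rule eventually_mono)
      fix t assume "t \<in> {m - 1<..<m}"
      then have "t \<notin> S" using cInf_lower[OF _ bdd, of t] m_def by force
      then show "cdf M t \<le> 1/2" by (auto simp: S_def)
    qed simp
  qed simp
  moreover have "measure M {m..} = 1 - measure M {..<m}"
    using prob_compl[of "{..<m}"] by (simp add: Compl_eq_Diff_UNIV[symmetric] not_less)
  ultimately show ?thesis by (auto simp: cdf_def)
qed

lemma (in prob_space) exists_median:
  fixes Y :: "'a \<Rightarrow> real"
  assumes "random_variable borel Y"
  shows "\<exists>m. is_median M Y m"
proof -
  interpret D: real_distribution "distr M borel Y" using assms by simp
  have "measure (distr M borel Y) B = prob {x \<in> space M. Y x \<in> B}" if "B \<in> sets borel" for B
    using assms that by (subst measure_distr) (auto intro!: arg_cong[where f = prob])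
  then show ?thesis using D.exists_median by (auto simp: is_median_def)
qed

lemma (in prob_space) prob_abs_ge_ge_half_if_median:
  fixes Y :: "'a \<Rightarrow> real"
  assumes "random_variable borel Y" and "is_median M Y \<mu>" and "s < \<bar>\<mu>\<bar>"
  shows "1/2 \<le> prob {x \<in> space M. s \<le> \<bar>Y x\<bar>}"
proof -
  have [measurable]: "Y \<in> borel_measurable M" using assms(1) by simp
  have "prob {x \<in> space M. \<mu> \<le> Y x} \<le> prob {x \<in> space M. s \<le> \<bar>Y x\<bar>}" if "0 \<le> \<mu>"
    using that assms(3) by (intro finite_measure_mono) auto
  moreover have "prob {x \<in> space M. Y x \<le> \<mu>} \<le> prob {x \<in> space M. s \<le> \<bar>Y x\<bar>}" if "\<mu> < 0"
    using that assms(3) by (intro finite_measure_mono) auto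
  ultimately show ?thesis using assms(2) unfolding is_median_def by force
qed

lemma (in prob_space) summable_tau_median_outliers:
  fixes Y :: "nat \<Rightarrow> 'a \<Rightarrow> real" and \<tau> s \<mu> :: "nat \<Rightarrow> real"
  assumes Y: "\<And>n. random_variable borel (Y n)"
    and med: "\<And>n. 1 \<le> n \<Longrightarrow> is_median M (Y n) (\<mu> n)"
    and \<tau>: "\<And>n. 0 \<le> \<tau> n"
    and summable: "summable (\<lambda>n. \<tau> n * prob {x \<in> space M. s n \<le> \<bar>Y n x\<bar>})"
  shows "summable (\<lambda>n. if 1 \<le> n \<and> s n < \<bar>\<mu> n\<bar> then \<tau> n else 0)"
proof (rule summable_comparison_test[OF _ summable_mult[OF summable, of 2]], intro exI allI impI)
  fix n
  have "\<tau> n \<le> 2 * (\<tau> n * prob {x \<in> space M. s n \<le> \<bar>Y n x\<bar>})" if "1 \<le> n" "s n < \<bar>\<mu> n\<bar>"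
    using mult_left_mono[OF prob_abs_ge_ge_half_if_median[OF Y med[OF that(1)] that(2)] \<tau>[of n]]
    by simp
  then show "norm (if 1 \<le> n \<and> s n < \<bar>\<mu> n\<bar> then \<tau> n else 0)
      \<le> 2 * (\<tau> n * prob {x \<in> space M. s n \<le> \<bar>Y n x\<bar>})"
    using \<tau>[of n] by auto
qed

lemma (in finite_measure) measure_UNION_Bonferroni:
  fixes r :: nat
  assumes "\<And>k. k \<in> {1..r} \<Longrightarrow> A k \<in> sets M"
  shows "(\<Sum>k=1..r. measure M (A k)) - (\<Sum>k=1..r. \<Sum>j=1..<k. measure M (A j \<inter> A k))
           \<le> measure M (\<Union>k\<in>{1..r}. A k)"
  using assms
proof (induction r)
  case (Suc r)
  let ?U = "\<Union>k\<in>{1..r}. A k" and ?B = "A (Suc r)"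
  have sets: "?U \<in> sets M" "?B \<in> sets M" "\<And>j. j \<in> {1..r} \<Longrightarrow> A j \<in> sets M"
    using Suc.prems by auto
  have "measure M (?U \<inter> ?B) = measure M (\<Union>j\<in>{1..r}. A j \<inter> ?B)"
    by (simp add: Int_UN_distrib2)
  also have "\<dots> \<le> (\<Sum>j=1..r. measure M (A j \<inter> ?B))"
    using sets by (intro measure_UNION_le) auto
  finally have "measure M (?U \<inter> ?B) \<le> (\<Sum>j=1..r. measure M (A j \<inter> ?B))" .
  moreover have "measure M (?U \<union> ?B) = measure M ?U + measure M ?B - measure M (?U \<inter> ?B)"
    using sets by (intro measure_Un3) (auto simp: fmeasurable_eq_sets)
  moreover have "(\<Union>k\<in>{1..Suc r}. A k) = ?U \<union> ?B"
    by (simp add: atLeastAtMostSuc_conv Un_commute)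
  ultimately show ?case
    using Suc.IH sets(3) by (simp add: sum.cl_ivl_Suc atLeastLessThanSuc_atLeastAtMost)
qed simp

lemma (in prob_space) prob_indep_random_variable_compl:
  assumes XY: "indep_var borel X borel Y" and "A \<in> sets borel" "B \<in> sets borel"
  shows "prob {x \<in> space M. X x \<in> A \<and> Y x \<notin> B}
           = prob {x \<in> space M. X x \<in> A} * (1 - prob {x \<in> space M. Y x \<in> B})"
proof -
  have [measurable]: "Y \<in> borel_measurable M" using indep_var_rv2[OF XY] by simp
  have [measurable]: "B \<in> sets borel" by (rule assms(3))
  have "prob {x \<in> space M. X x \<in> A \<and> Y x \<in> - B}
      = prob {x \<in> space M. X x \<in> A} * prob {x \<in> space M. Y x \<in> - B}"
    by (rule prob_indep_random_variable[OF XY]) (use assms in auto)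
  moreover have "{x \<in> space M. Y x \<in> - B} = space M - {x \<in> space M. Y x \<in> B}" by auto
  moreover have "prob (space M - {x \<in> space M. Y x \<in> B}) = 1 - prob {x \<in> space M. Y x \<in> B}"
    by (intro prob_compl) measurable
  ultimately show ?thesis by simp
qed

lemma (in prob_space) prob_abs_ge_le_twice_prob_abs_add:
  fixes X Y :: "'a \<Rightarrow> real"
  assumes XY: "indep_var borel X borel Y"
    and m: "1/2 \<le> prob {x \<in> space M. \<bar>X x\<bar> \<le> m}" and "m \<le> t"
  shows "prob {x \<in> space M. 2 * t \<le> \<bar>Y x\<bar>} \<le> 2 * prob {x \<in> space M. t \<le> \<bar>X x + Y x\<bar>}"
proof -
  have [measurable]: "X \<in> borel_measurable M" "Y \<in> borel_measurable M"
    using indep_var_rv1[OF XY] indep_var_rv2[OF XY] by simp_all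
  have "prob {x \<in> space M. \<bar>X x\<bar> \<le> m} * prob {x \<in> space M. 2 * t \<le> \<bar>Y x\<bar>}
      = prob {x \<in> space M. X x \<in> {y. \<bar>y\<bar> \<le> m} \<and> Y x \<in> {y. 2 * t \<le> \<bar>y\<bar>}}"
    by (subst prob_indep_random_variable[OF XY]) auto
  also have "\<dots> \<le> prob {x \<in> space M. t \<le> \<bar>X x + Y x\<bar>}"
    using \<open>m \<le> t\<close> by (intro finite_measure_mono) auto
  finally show ?thesis
    using m mult_right_mono[OF m, of "prob {x \<in> space M. 2 * t \<le> \<bar>Y x\<bar>}"] by simp
qed

lemma le_six_mult_of_Bonferroni_bound:
  fixes u q :: real
  assumes "0 \<le> u" "u \<le> 1" "0 \<le> q" and bound: "u * (1 - 2 * q) - u\<^sup>2 / 2 \<le> q"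
  shows "u \<le> 6 * q"
proof -
  have "u\<^sup>2 \<le> u" "u * q \<le> q"
    using assms by (simp_all add: power2_eq_square mult_left_le_one_le mult_right_le_one_le)
  then show ?thesis using bound by (simp add: algebra_simps)
qed

lemma exists_nat_mult_between_half_one:
  fixes p :: real
  assumes "0 < p" "p \<le> 1"
  shows "\<exists>r::nat. 1/2 \<le> real r * p \<and> real r * p \<le> 1"
proof (intro exI conjI)
  define r where "r = nat \<lfloor>1/p\<rfloor>"
  have "1 \<le> 1/p" using assms by (simp add: field_simps)
  then have "1 \<le> \<lfloor>1/p\<rfloor>" by (simp add: le_floor_iff)
  moreover have r: "real r = of_int \<lfloor>1/p\<rfloor>"
    unfolding r_def using \<open>1 \<le> \<lfloor>1/p\<rfloor>\<close> by (intro of_nat_nat) linarith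
  ultimately have "1 \<le> real r" by linarith
  have "1/p - 1 < real r" "real r \<le> 1/p" using r by linarith+
  then have "1 - p < real r * p" "real r * p \<le> 1" using assms by (simp_all add: field_simps)
  moreover have "p \<le> real r * p" using \<open>1 \<le> real r\<close> assms by simp
  ultimately show "real r * p \<le> 1" "1/2 \<le> real r * p" by linarith+
qed

locale iid_real_sequence = prob_space +
  fixes X :: "nat \<Rightarrow> 'a \<Rightarrow> real"
  assumes indep: "indep_vars (\<lambda>_. borel) X {1..}"
    and ident: "\<And>i. 1 \<le> i \<Longrightarrow> distr M borel (X i) = distr M borel (X 1)"
begin

lemma random_variable_X: "1 \<le> i \<Longrightarrow> random_variable borel (X i)"
  using indep unfolding indep_vars_def by auto

lemma random_variable_partial_sum: "random_variable borel (\<lambda>x. \<Sum>i=1..n. X i x)"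
  using random_variable_X by (intro borel_measurable_sum) auto

lemma prob_X_eq:
  assumes "1 \<le> i" "B \<in> sets borel"
  shows "prob {x \<in> space M. X i x \<in> B} = prob {x \<in> space M. X 1 x \<in> B}"
proof -
  have "prob {x \<in> space M. X j x \<in> B} = measure (distr M borel (X j)) B" if "1 \<le> j" for j
    using that assms(2) random_variable_X[OF that]
    by (subst measure_distr) (auto intro!: arg_cong[where f = prob])
  then show ?thesis using ident[OF assms(1)] assms(1) by simp
qed

lemma indep_var_X_sum_others:
  assumes "k \<in> {1..n}"
  shows "indep_var borel (X k) borel (\<lambda>x. \<Sum>i\<in>{1..n} - {k}. X i x)"
proof (rule indep_vars_sum)
  show "indep_vars (\<lambda>_. borel) X (insert k ({1..n} - {k}))"
    by (rule indep_vars_subset[OF indep]) (use assms in auto)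
qed auto

lemma indep_var_X_X:
  assumes "1 \<le> j" "1 \<le> k" "j \<noteq> k"
  shows "indep_var borel (X j) borel (X k)"
proof -
  have "indep_vars (\<lambda>_. borel) X (insert j {k})"
    by (rule indep_vars_subset[OF indep]) (use assms in auto)
  from indep_vars_sum[OF _ _ this] show ?thesis using assms by simp
qed

lemma prob_tail_and_others_small_ge:
  assumes m: "1/2 \<le> prob {x \<in> space M. \<bar>X 1 x\<bar> \<le> m}" and "m \<le> t" and k: "k \<in> {1..n}"
  shows "prob {x \<in> space M. 3 * t \<le> \<bar>X 1 x\<bar>} * (1 - 2 * prob {x \<in> space M. t \<le> \<bar>\<Sum>i=1..n. X i x\<bar>})
           \<le> prob {x \<in> space M. 3 * t \<le> \<bar>X k x\<bar> \<and> \<bar>\<Sum>i\<in>{1..n} - {k}. X i x\<bar> < 2 * t}"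
proof -
  let ?R = "\<lambda>x. \<Sum>i\<in>{1..n} - {k}. X i x"
  have indep_k: "indep_var borel (X k) borel ?R" using indep_var_X_sum_others[OF k] .
  have "1/2 \<le> prob {x \<in> space M. \<bar>X k x\<bar> \<le> m}"
    using prob_X_eq[of k "{y. \<bar>y\<bar> \<le> m}"] k m by simp
  from prob_abs_ge_le_twice_prob_abs_add[OF indep_k this \<open>m \<le> t\<close>]
  have "prob {x \<in> space M. 2 * t \<le> \<bar>?R x\<bar>} \<le> 2 * prob {x \<in> space M. t \<le> \<bar>\<Sum>i=1..n. X i x\<bar>}"
    using k by (simp add: sum.remove)
  moreover have "prob {x \<in> space M. 3 * t \<le> \<bar>X k x\<bar> \<and> \<bar>?R x\<bar> < 2 * t}
      = prob {x \<in> space M. 3 * t \<le> \<bar>X 1 x\<bar>} * (1 - prob {x \<in> space M. 2 * t \<le> \<bar>?R x\<bar>})"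
    using prob_indep_random_variable_compl[OF indep_k, of "{y. 3 * t \<le> \<bar>y\<bar>}" "{y. 2 * t \<le> \<bar>y\<bar>}"]
      prob_X_eq[of k "{y. 3 * t \<le> \<bar>y\<bar>}"] k
    by (simp add: not_le)
  ultimately show ?thesis by (simp add: mult_left_mono)
qed

lemma prob_both_tails:
  assumes "1 \<le> j" "1 \<le> k" "j \<noteq> k"
  shows "prob {x \<in> space M. s \<le> \<bar>X j x\<bar> \<and> s \<le> \<bar>X k x\<bar>} = (prob {x \<in> space M. s \<le> \<bar>X 1 x\<bar>})\<^sup>2"
  using prob_indep_random_variable[OF indep_var_X_X[OF assms], of "{y. s \<le> \<bar>y\<bar>}" "{y. s \<le> \<bar>y\<bar>}"]
    prob_X_eq[of j "{y. s \<le> \<bar>y\<bar>}"] prob_X_eq[of k "{y. s \<le> \<bar>y\<bar>}"] assms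
  by (simp add: power2_eq_square)

lemma Bonferroni_bound_partial_sum_tail:
  fixes n r :: nat and m t :: real
  defines "p \<equiv> prob {x \<in> space M. 3 * t \<le> \<bar>X 1 x\<bar>}"
    and "q \<equiv> prob {x \<in> space M. t \<le> \<bar>\<Sum>i=1..n. X i x\<bar>}"
  assumes m: "1/2 \<le> prob {x \<in> space M. \<bar>X 1 x\<bar> \<le> m}" and "m \<le> t" and "r \<le> n"
  shows "real r * p * (1 - 2 * q) - (real r * p)\<^sup>2 / 2 \<le> q"
proof -
  define A where "A k = {x \<in> space M. 3 * t \<le> \<bar>X k x\<bar> \<and> \<bar>\<Sum>i\<in>{1..n} - {k}. X i x\<bar> < 2 * t}" for k
  have [measurable]: "(\<lambda>x. \<Sum>i=1..n. X i x) \<in> borel_measurable M"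
    using random_variable_partial_sum by simp
  have [measurable]: "X i \<in> borel_measurable M" if "1 \<le> i" for i
    using random_variable_X[OF that] by simp
  have A_events: "A k \<in> events" if "1 \<le> k" for k
    unfolding A_def using that by measurable
  have A_subset: "A k \<subseteq> {x \<in> space M. t \<le> \<bar>\<Sum>i=1..n. X i x\<bar>}" if "k \<in> {1..n}" for k
    using that by (auto simp: A_def sum.remove)
  have "(\<Sum>k=1..r. prob (A k)) - (\<Sum>k=1..r. \<Sum>j=1..<k. prob (A j \<inter> A k))
      \<le> prob (\<Union>k\<in>{1..r}. A k)"
    using A_events by (intro measure_UNION_Bonferroni) auto
  also have "\<dots> \<le> q"
  proof (unfold q_def, rule finite_measure_mono)
    show "(\<Union>k\<in>{1..r}. A k) \<subseteq> {x \<in> space M. t \<le> \<bar>\<Sum>i=1..n. X i x\<bar>}"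
      using \<open>r \<le> n\<close> by (intro UN_least A_subset) auto
  qed measurable
  finally have Bonferroni: "(\<Sum>k=1..r. prob (A k)) - (\<Sum>k=1..r. \<Sum>j=1..<k. prob (A j \<inter> A k)) \<le> q" .
  have "real r * (p * (1 - 2 * q)) \<le> (\<Sum>k=1..r. prob (A k))"
    using sum_mono[of "{1..r}" "\<lambda>_. p * (1 - 2 * q)"] \<open>r \<le> n\<close>
      prob_tail_and_others_small_ge[OF m \<open>m \<le> t\<close>, of _ n]
    by (auto simp: p_def q_def A_def)
  moreover have "prob (A j \<inter> A k) \<le> p * p" if "1 \<le> j" "1 \<le> k" "j \<noteq> k" for j k
  proof -
    have "prob (A j \<inter> A k) \<le> prob {x \<in> space M. 3 * t \<le> \<bar>X j x\<bar> \<and> 3 * t \<le> \<bar>X k x\<bar>}"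
      using that by (intro finite_measure_mono) (force simp: A_def, measurable)
    then show ?thesis using prob_both_tails[OF that] by (simp add: p_def power2_eq_square)
  qed
  then have "(\<Sum>k=1..r. \<Sum>j=1..<k. prob (A j \<inter> A k)) \<le> (\<Sum>k=1..r. \<Sum>j=1..<k. p * p)"
    by (intro sum_mono) auto
  moreover have "(\<Sum>k=1..r. \<Sum>j=1..<k. p * p) = p * p * (real r * (real r - 1) / 2)"
    by (induction r) (auto simp: field_simps)
  moreover have "p * p * (real r * (real r - 1) / 2) \<le> (real r * p)\<^sup>2 / 2"
    by (simp add: power2_eq_square algebra_simps p_def)
  ultimately show ?thesis using Bonferroni by (simp add: algebra_simps)
qed

lemma min_mult_prob_tail_le_prob_partial_sum_tail:
  assumes m: "1/2 \<le> prob {x \<in> space M. \<bar>X 1 x\<bar> \<le> m}" and "m \<le> t"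
  shows "min (real n * prob {x \<in> space M. 3 * t \<le> \<bar>X 1 x\<bar>}) 1
           \<le> 12 * prob {x \<in> space M. t \<le> \<bar>\<Sum>i=1..n. X i x\<bar>}"
proof -
  define p where "p = prob {x \<in> space M. 3 * t \<le> \<bar>X 1 x\<bar>}"
  define q where "q = prob {x \<in> space M. t \<le> \<bar>\<Sum>i=1..n. X i x\<bar>}"
  have p: "0 \<le> p" "p \<le> 1" and q: "0 \<le> q" by (simp_all add: p_def q_def)
  have six: "real r * p \<le> 6 * q" if "r \<le> n" "real r * p \<le> 1" for r
    using le_six_mult_of_Bonferroni_bound[OF _ that(2) q] p
      Bonferroni_bound_partial_sum_tail[OF m \<open>m \<le> t\<close> that(1)]
    by (simp add: p_def q_def)
  have "min (real n * p) 1 \<le> 12 * q"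
  proof (cases "real n * p \<le> 1")
    case True
    then show ?thesis using six[of n] q by linarith
  next
    case False
    then have "0 < p" using p by (cases "p = 0") auto
    then obtain r where r: "1/2 \<le> real r * p" "real r * p \<le> 1"
      using exists_nat_mult_between_half_one p(2) by blast
    then have "real r * p < real n * p" using False by linarith
    then have "r \<le> n" using \<open>0 < p\<close> by (simp add: mult_less_cancel_right)
    then show ?thesis using six[of r] r by linarith
  qed
  then show ?thesis by (simp add: p_def q_def)
qed

lemma summable_min_weighted_tail_X1:
  fixes \<tau> a :: "nat \<Rightarrow> real" and \<epsilon> :: real
  assumes \<tau>: "\<And>n. 0 \<le> \<tau> n" and a_inf: "filterlim a at_top sequentially" and "0 < \<epsilon>"
    and summable: "summable (\<lambda>n. \<tau> n * prob {x \<in> space M. \<epsilon> / 3 * a n \<le> \<bar>\<Sum>i=1..n. X i x\<bar>})"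
  shows "summable (\<lambda>n. \<tau> n * min (real n * prob {x \<in> space M. \<epsilon> * a n \<le> \<bar>X 1 x\<bar>}) 1)"
proof -
  have "random_variable borel (\<lambda>x. \<bar>X 1 x\<bar>)" using random_variable_X by simp
  then obtain m where m: "1/2 \<le> prob {x \<in> space M. \<bar>X 1 x\<bar> \<le> m}"
    using exists_median unfolding is_median_def by blast
  have "\<forall>\<^sub>F n in sequentially. 3 * m / \<epsilon> \<le> a n"
    using a_inf by (simp add: filterlim_at_top)
  then have "\<forall>\<^sub>F n in sequentially. m \<le> \<epsilon> / 3 * a n"
    by eventually_elim (use \<open>0 < \<epsilon>\<close> in \<open>simp add: field_simps\<close>)
  then have "\<forall>\<^sub>F n in sequentially. norm (\<tau> n * min (real n * prob {x \<in> space M. \<epsilon> * a n \<le> \<bar>X 1 x\<bar>}) 1)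
      \<le> 12 * (\<tau> n * prob {x \<in> space M. \<epsilon> / 3 * a n \<le> \<bar>\<Sum>i=1..n. X i x\<bar>})"
  proof (rule eventually_mono)
    fix n assume "m \<le> \<epsilon> / 3 * a n"
    from min_mult_prob_tail_le_prob_partial_sum_tail[OF m this, of n]
    have bound: "min (real n * prob {x \<in> space M. \<epsilon> * a n \<le> \<bar>X 1 x\<bar>}) 1
        \<le> 12 * prob {x \<in> space M. \<epsilon> / 3 * a n \<le> \<bar>\<Sum>i=1..n. X i x\<bar>}"
      by simp
    show "norm (\<tau> n * min (real n * prob {x \<in> space M. \<epsilon> * a n \<le> \<bar>X 1 x\<bar>}) 1)
        \<le> 12 * (\<tau> n * prob {x \<in> space M. \<epsilon> / 3 * a n \<le> \<bar>\<Sum>i=1..n. X i x\<bar>})"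
      using mult_left_mono[OF bound \<tau>[of n]] \<tau>[of n] by simp
  qed
  then show ?thesis by (rule summable_comparison_test_ev) (intro summable_mult summable)
qed

lemma summable_weighted_tail_X1:
  fixes \<tau> a :: "nat \<Rightarrow> real" and \<epsilon> :: real
  assumes \<tau>: "\<And>n. 0 \<le> \<tau> n" and "condition_A \<tau>"
    and a_mono: "\<And>m n. 1 \<le> m \<Longrightarrow> m \<le> n \<Longrightarrow> a m \<le> a n"
    and a_inf: "filterlim a at_top sequentially" and "0 < \<epsilon>"
    and summable: "summable (\<lambda>n. \<tau> n * prob {x \<in> space M. \<epsilon> / 3 * a n \<le> \<bar>\<Sum>i=1..n. X i x\<bar>})"
  shows "summable (\<lambda>n. real n * \<tau> n * prob {x \<in> space M. \<epsilon> * a n \<le> \<bar>X 1 x\<bar>})"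
proof -
  have [measurable]: "X 1 \<in> borel_measurable M" using random_variable_X by simp
  \<comment> \<open>\<open>a 0\<close> is unconstrained, so index 0 is redirected to 1 to make \<open>c\<close> antitone.\<close>
  define c where "c n = prob {x \<in> space M. \<epsilon> * a (max n 1) \<le> \<bar>X 1 x\<bar>}" for n
  have c_nonneg: "\<forall>n. 0 \<le> c n" by (simp add: c_def)
  have "antimono c"
  proof (rule antimonoI)
    fix k n :: nat assume "k \<le> n"
    then have "\<epsilon> * a (max k 1) \<le> \<epsilon> * a (max n 1)" using a_mono \<open>0 < \<epsilon>\<close> by simp
    then show "c n \<le> c k" unfolding c_def by (intro finite_measure_mono) (force, measurable)
  qed
  have c_eq: "\<forall>\<^sub>F n in sequentially. c n = prob {x \<in> space M. \<epsilon> * a n \<le> \<bar>X 1 x\<bar>}"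
    using eventually_ge_at_top[of 1] by eventually_elim (simp add: c_def max_absorb1)
  have "summable (\<lambda>n. \<tau> n * min (real n * c n) 1)"
  proof (rule summable_cong[THEN iffD1, OF _ summable_min_weighted_tail_X1[OF \<tau> a_inf \<open>0 < \<epsilon>\<close> summable]])
    show "\<forall>\<^sub>F n in sequentially. \<tau> n * min (real n * prob {x \<in> space M. \<epsilon> * a n \<le> \<bar>X 1 x\<bar>}) 1
        = \<tau> n * min (real n * c n) 1"
      using c_eq by eventually_elim simp
  qed
  then have "summable (\<lambda>n. \<tau> n * (real n * c n))"
    using \<open>condition_A \<tau>\<close> \<open>antimono c\<close> c_nonneg unfolding condition_A_def by blast
  moreover have "\<forall>\<^sub>F n in sequentially. \<tau> n * (real n * c n)
      = real n * \<tau> n * prob {x \<in> space M. \<epsilon> * a n \<le> \<bar>X 1 x\<bar>}"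
    using c_eq by eventually_elim simp
  ultimately show ?thesis by (rule summable_cong[THEN iffD1, rotated])
qed

end

theorem lemma2:
  fixes M :: "'a measure" and X :: "nat \<Rightarrow> 'a \<Rightarrow> real"
    and \<tau> a :: "nat \<Rightarrow> real" and \<theta> C :: real and N :: nat
  assumes P: "prob_space M"
    and indep: "prob_space.indep_vars M (\<lambda>_. borel) X {1..}"
    and ident: "\<And>i. i \<ge> 1 \<Longrightarrow> distr M borel (X i) = distr M borel (X 1)"
    and tau_nonneg: "\<And>n. \<tau> n \<ge> 0"
    and tau_A: "condition_A \<tau>"
    and a_mono: "\<And>m n. 1 \<le> m \<Longrightarrow> m \<le> n \<Longrightarrow> a m \<le> a n"
    and a_pos: "\<And>n. n \<ge> 1 \<Longrightarrow> a n > 0"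
    and a_inf: "filterlim a at_top sequentially"
    and theta: "\<theta> \<ge> 1" and Cpos: "C > 0" and N2: "N \<ge> 2"
    and tail: "\<And>n. n \<ge> N \<Longrightarrow>
        summable (\<lambda>k. real (k + n) powr \<theta> * \<tau> (k + n) / a (k + n) powr (3 * \<theta>)) \<and>
        a n powr (3 * \<theta>) / real n powr (\<theta> - 1) *
          (\<Sum>k. real (k + n) powr \<theta> * \<tau> (k + n) / a (k + n) powr (3 * \<theta>))
        \<le> C * (\<Sum>k = 1..n - 1. real k * \<tau> k)"
    and liminf_cond: "\<theta> > 1 \<Longrightarrow>
        liminf (\<lambda>n. (INF k\<in>{n..}. ereal (a k ^ 3 / (real k * a n ^ 3)))
                     * ereal (\<Sum>j = 1..n - 1. real j * \<tau> j)) > 0"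
    and hyp: "\<And>\<epsilon>. \<epsilon> > 0 \<Longrightarrow>
        summable (\<lambda>n. \<tau> n * measure M {x \<in> space M. \<bar>\<Sum>i = 1..n. X i x\<bar> \<ge> \<epsilon> * a n})"
  shows "(\<exists>\<mu> :: nat \<Rightarrow> real.
            (\<forall>n \<ge> 1. is_median M (\<lambda>x. \<Sum>i = 1..n. X i x) (\<mu> n)) \<and>
            (\<forall>\<epsilon> > 0. summable (\<lambda>n. if n \<ge> 1 \<and> \<bar>\<mu> n\<bar> > \<epsilon> * a n then \<tau> n else 0)))
       \<and> (\<forall>\<epsilon> > 0. summable (\<lambda>n. real n * \<tau> n * measure M {x \<in> space M. \<bar>X 1 x\<bar> \<ge> \<epsilon> * a n}))"
proof -
  interpret iid_real_sequence M X
    using P indep ident by (intro iid_real_sequence.intro iid_real_sequence_axioms.intro)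
  obtain \<mu> where \<mu>: "\<And>n. is_median M (\<lambda>x. \<Sum>i=1..n. X i x) (\<mu> n)"
    using exists_median[OF random_variable_partial_sum] by metis
  have "summable (\<lambda>n. if 1 \<le> n \<and> \<epsilon> * a n < \<bar>\<mu> n\<bar> then \<tau> n else 0)" if "0 < \<epsilon>" for \<epsilon>
    using summable_tau_median_outliers[OF random_variable_partial_sum \<mu> tau_nonneg hyp[OF that]] .
  moreover have "summable (\<lambda>n. real n * \<tau> n * prob {x \<in> space M. \<epsilon> * a n \<le> \<bar>X 1 x\<bar>})"
    if "0 < \<epsilon>" for \<epsilon>
    using summable_weighted_tail_X1[OF tau_nonneg tau_A a_mono a_inf that hyp[of "\<epsilon> / 3"]] that
    by simp
  ultimately show ?thesis using \<mu> by blast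
qed

end
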